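(* Let $X$ be a proper geodesic metric space, $e\in X$ and $N$ a Morse gauge. There exists a constant $K'>0$, depending only on $N$, such that if $\gamma,\gamma'$ are limit geodesics for the same pair of distinct endpoints $\lambda^-,\lambda^+\in\partial X^{(N)}_e$ (possibly arising from different sequences and choices), then $d_{Haus}(\gamma,\gamma')<K'$.
   Context: A Morse gauge is a function $N:\mathbb{R}_{\geq 1}\times\mathbb{R}_{\geq 0}\to\mathbb{R}_{\geq 0}$; a (quasi)geodesic is $N$-Morse if every $(K,C)$-quasigeodesic with endpoints on it lies in its $N(K,C)$-neighborhood. $X^{(N)}_e$ is the set of $y\in X$ such that some geodesic $[e,y]$ is $N$-Morse; $\partial X^{(N)}_e$ is its sequential Gromov boundary. Limit geodesics: given $(x_n),(y_n)\subset X^{(N)}_e$ converging at infinity to $\lambda^-\neq\lambda^+\in\partial X^{(N)}_e$, choose $N$-Morse geodesics $[e,x_n],[e,y_n]$; they subsequentially converge uniformly on compact sets to geodesic rays $\gamma_x,\gamma_y$ from $e$ (limit legs). For each $n$ let $\gamma_n$ be a geodesic from $\gamma_x(n)$ to $\gamma_y(n)$; any biinfinite geodesic $\gamma$ which is a uniform-on-compacts subsequential limit of $(\gamma_n)$ is a limit geodesic for $\lambda^-,\lambda^+$. *)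

theory Defs
  imports "HOL-Analysis.Analysis"
begin

definition proper_mspace :: "'a set \<Rightarrow> ('a \<Rightarrow> 'a \<Rightarrow> real) \<Rightarrow> bool" where
  "proper_mspace M d \<longleftrightarrow>
     (\<forall>x\<in>M. \<forall>r. compactin (Metric_space.mtopology M d) (Metric_space.mcball M d x r))"

definition geodesic_on :: "'a set \<Rightarrow> ('a \<Rightarrow> 'a \<Rightarrow> real) \<Rightarrow> real set \<Rightarrow> (real \<Rightarrow> 'a) \<Rightarrow> bool" where
  "geodesic_on M d I p \<longleftrightarrow> p ` I \<subseteq> M \<and> (\<forall>s\<in>I. \<forall>t\<in>I. d (p s) (p t) = \<bar>s - t\<bar>)"

definition geodesic_segment :: "'a set \<Rightarrow> ('a \<Rightarrow> 'a \<Rightarrow> real) \<Rightarrow> real \<Rightarrow> real \<Rightarrow> (real \<Rightarrow> 'a) \<Rightarrow> 'a \<Rightarrow> 'a \<Rightarrow> bool" where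
  "geodesic_segment M d a b p x y \<longleftrightarrow> a \<le> b \<and> geodesic_on M d {a..b} p \<and> p a = x \<and> p b = y"

definition geodesic_mspace :: "'a set \<Rightarrow> ('a \<Rightarrow> 'a \<Rightarrow> real) \<Rightarrow> bool" where
  "geodesic_mspace M d \<longleftrightarrow> (\<forall>x\<in>M. \<forall>y\<in>M. \<exists>p. geodesic_segment M d 0 (d x y) p x y)"

definition geodesic_ray :: "'a set \<Rightarrow> ('a \<Rightarrow> 'a \<Rightarrow> real) \<Rightarrow> (real \<Rightarrow> 'a) \<Rightarrow> 'a \<Rightarrow> bool" where
  "geodesic_ray M d r e \<longleftrightarrow> geodesic_on M d {0..} r \<and> r 0 = e"

definition biinfinite_geodesic :: "'a set \<Rightarrow> ('a \<Rightarrow> 'a \<Rightarrow> real) \<Rightarrow> (real \<Rightarrow> 'a) \<Rightarrow> bool" where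
  "biinfinite_geodesic M d g \<longleftrightarrow> geodesic_on M d UNIV g"

text \<open>(K,C)-quasigeodesic on [a,b] (not required to be continuous).\<close>
definition quasigeodesic :: "'a set \<Rightarrow> ('a \<Rightarrow> 'a \<Rightarrow> real) \<Rightarrow> real \<Rightarrow> real \<Rightarrow> real \<Rightarrow> real \<Rightarrow> (real \<Rightarrow> 'a) \<Rightarrow> bool" where
  "quasigeodesic M d K C a b q \<longleftrightarrow> a \<le> b \<and> q ` {a..b} \<subseteq> M \<and>
     (\<forall>s\<in>{a..b}. \<forall>t\<in>{a..b}. \<bar>s - t\<bar> / K - C \<le> d (q s) (q t) \<and> d (q s) (q t) \<le> K * \<bar>s - t\<bar> + C)"

definition mnbhd :: "'a set \<Rightarrow> ('a \<Rightarrow> 'a \<Rightarrow> real) \<Rightarrow> real \<Rightarrow> 'a set \<Rightarrow> 'a set" where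
  "mnbhd M d r S = {x\<in>M. \<exists>y\<in>S. d x y \<le> r}"

definition morse_gauge :: "(real \<Rightarrow> real \<Rightarrow> real) \<Rightarrow> bool" where
  "morse_gauge N \<longleftrightarrow> (\<forall>K\<ge>1. \<forall>C\<ge>0. N K C \<ge> 0)"

definition morse_set :: "'a set \<Rightarrow> ('a \<Rightarrow> 'a \<Rightarrow> real) \<Rightarrow> (real \<Rightarrow> real \<Rightarrow> real) \<Rightarrow> 'a set \<Rightarrow> bool" where
  "morse_set M d N S \<longleftrightarrow>
     (\<forall>K C a b q. K \<ge> 1 \<longrightarrow> C \<ge> 0 \<longrightarrow> quasigeodesic M d K C a b q \<longrightarrow>
        q a \<in> S \<longrightarrow> q b \<in> S \<longrightarrow> q ` {a..b} \<subseteq> mnbhd M d (N K C) S)"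

definition morse_geodesic_from :: "'a set \<Rightarrow> ('a \<Rightarrow> 'a \<Rightarrow> real) \<Rightarrow> (real \<Rightarrow> real \<Rightarrow> real) \<Rightarrow> 'a \<Rightarrow> 'a \<Rightarrow> (real \<Rightarrow> 'a) \<Rightarrow> bool" where
  "morse_geodesic_from M d N e y p \<longleftrightarrow>
     geodesic_segment M d 0 (d e y) p e y \<and> morse_set M d N (p ` {0..d e y})"

definition morse_stratum :: "'a set \<Rightarrow> ('a \<Rightarrow> 'a \<Rightarrow> real) \<Rightarrow> (real \<Rightarrow> real \<Rightarrow> real) \<Rightarrow> 'a \<Rightarrow> 'a set" where
  "morse_stratum M d N e = {y\<in>M. \<exists>p. morse_geodesic_from M d N e y p}"

definition gromov_product :: "('a \<Rightarrow> 'a \<Rightarrow> real) \<Rightarrow> 'a \<Rightarrow> 'a \<Rightarrow> 'a \<Rightarrow> real" where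
  "gromov_product d e x y = (d e x + d e y - d x y) / 2"

definition converges_at_infinity :: "('a \<Rightarrow> 'a \<Rightarrow> real) \<Rightarrow> 'a \<Rightarrow> (nat \<Rightarrow> 'a) \<Rightarrow> bool" where
  "converges_at_infinity d e x \<longleftrightarrow>
     (\<forall>R. \<exists>n0. \<forall>i\<ge>n0. \<forall>j\<ge>n0. gromov_product d e (x i) (x j) \<ge> R)"

definition equiv_at_infinity :: "('a \<Rightarrow> 'a \<Rightarrow> real) \<Rightarrow> 'a \<Rightarrow> (nat \<Rightarrow> 'a) \<Rightarrow> (nat \<Rightarrow> 'a) \<Rightarrow> bool" where
  "equiv_at_infinity d e x y \<longleftrightarrow>
     (\<forall>R. \<exists>n0. \<forall>i\<ge>n0. \<forall>j\<ge>n0. gromov_product d e (x i) (y j) \<ge> R)"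

definition stratum_seqs_at_infinity :: "'a set \<Rightarrow> ('a \<Rightarrow> 'a \<Rightarrow> real) \<Rightarrow> (real \<Rightarrow> real \<Rightarrow> real) \<Rightarrow> 'a \<Rightarrow> (nat \<Rightarrow> 'a) set" where
  "stratum_seqs_at_infinity M d N e =
     {x. range x \<subseteq> morse_stratum M d N e \<and> converges_at_infinity d e x}"

definition morse_boundary :: "'a set \<Rightarrow> ('a \<Rightarrow> 'a \<Rightarrow> real) \<Rightarrow> (real \<Rightarrow> real \<Rightarrow> real) \<Rightarrow> 'a \<Rightarrow> (nat \<Rightarrow> 'a) set set" where
  "morse_boundary M d N e =
     {{y\<in>stratum_seqs_at_infinity M d N e. equiv_at_infinity d e x y} | x.
        x \<in> stratum_seqs_at_infinity M d N e}"

definition segs_converge_to_ray :: "('a \<Rightarrow> 'a \<Rightarrow> real) \<Rightarrow> (nat \<Rightarrow> real) \<Rightarrow> (nat \<Rightarrow> real \<Rightarrow> 'a) \<Rightarrow> (real \<Rightarrow> 'a) \<Rightarrow> bool" where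
  "segs_converge_to_ray d L p r \<longleftrightarrow>
     (\<forall>T\<ge>0. \<forall>\<epsilon>>0. \<exists>n0. \<forall>n\<ge>n0. T \<le> L n \<and> (\<forall>t\<in>{0..T}. d (p n t) (r t) < \<epsilon>))"

definition segs_converge_to_line :: "('a \<Rightarrow> 'a \<Rightarrow> real) \<Rightarrow> (nat \<Rightarrow> real) \<Rightarrow> (nat \<Rightarrow> real) \<Rightarrow> (nat \<Rightarrow> real \<Rightarrow> 'a) \<Rightarrow> (real \<Rightarrow> 'a) \<Rightarrow> bool" where
  "segs_converge_to_line d A B g g0 \<longleftrightarrow>
     (\<forall>T\<ge>0. \<forall>\<epsilon>>0. \<exists>n0. \<forall>n\<ge>n0. A n \<le> -T \<and> T \<le> B n \<and> (\<forall>t\<in>{-T..T}. d (g n t) (g0 t) < \<epsilon>))"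

definition limit_geodesic :: "'a set \<Rightarrow> ('a \<Rightarrow> 'a \<Rightarrow> real) \<Rightarrow> (real \<Rightarrow> real \<Rightarrow> real) \<Rightarrow> 'a \<Rightarrow>
    (nat \<Rightarrow> 'a) set \<Rightarrow> (nat \<Rightarrow> 'a) set \<Rightarrow> (real \<Rightarrow> 'a) \<Rightarrow> bool" where
  "limit_geodesic M d N e Lm Lp g0 \<longleftrightarrow>
     (\<exists>x y \<alpha> \<beta> \<phi> rx ry A B g \<psi>.
        x \<in> Lm \<and> y \<in> Lp \<and>
        (\<forall>n. morse_geodesic_from M d N e (x n) (\<alpha> n)) \<and>
        (\<forall>n. morse_geodesic_from M d N e (y n) (\<beta> n)) \<and>
        strict_mono \<phi> \<and>
        geodesic_ray M d rx e \<and> geodesic_ray M d ry e \<and>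
        segs_converge_to_ray d (\<lambda>n. d e (x (\<phi> n))) (\<lambda>n. \<alpha> (\<phi> n)) rx \<and>
        segs_converge_to_ray d (\<lambda>n. d e (y (\<phi> n))) (\<lambda>n. \<beta> (\<phi> n)) ry \<and>
        (\<forall>n. geodesic_segment M d (A n) (B n) (g n) (rx (real n)) (ry (real n))) \<and>
        strict_mono \<psi> \<and>
        biinfinite_geodesic M d g0 \<and>
        segs_converge_to_line d (\<lambda>n. A (\<psi> n)) (\<lambda>n. B (\<psi> n)) (\<lambda>n. g (\<psi> n)) g0)"

definition mhausdist :: "('a \<Rightarrow> 'a \<Rightarrow> real) \<Rightarrow> 'a set \<Rightarrow> 'a set \<Rightarrow> ereal" where
  "mhausdist d S T = max (SUP s\<in>S. INF t\<in>T. ereal (d s t)) (SUP t\<in>T. INF s\<in>S. ereal (d s t))"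

end

theory Submission
  imports Defs
begin

text \<open>
  Fix a point p = g t of one limit geodesic. Near p, g is approximated by a geodesic segment h
  between points within 1 of a T and b T, where a, b are N-Morse geodesics from e towards the two
  boundary points; likewise g' is approximated by a segment h' with endpoints near a' m, b' m,
  where m is large compared with d e p and T is larger still.

  The geometric core: if h up is the point of a geodesic h closest to e, then [e, h up] followed
  by h back to an endpoint is a (3,1)-quasigeodesic, so if that endpoint is near an N-Morse
  geodesic a from e, this part of h stays within N 3 1 + 1 of a. Consequently each point of h lies
  near a at (roughly) its own distance from e, two N-Morse geodesics from e fellow-travel up to their
  Gromov product, representatives of the same boundary point therefore have eventually
  8 (N 3 1 + 1)-fellow-travelling Morse geodesics, and h' sweeps along a' beyond its own closest
  point. Chaining these estimates puts p within 23 (N 3 1 + 1) + 7 of g', a bound depending on N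
  alone. Properness and the distinctness of the two boundary points only serve to make limit
  geodesics exist; the bound does not use them.
\<close>

section \<open>Geodesics and Gromov products\<close>

lemma geodesic_on_dist: "geodesic_on M d I p \<Longrightarrow> s \<in> I \<Longrightarrow> t \<in> I \<Longrightarrow> d (p s) (p t) = \<bar>s - t\<bar>"
  unfolding geodesic_on_def by blast

lemma geodesic_on_mem: "geodesic_on M d I p \<Longrightarrow> s \<in> I \<Longrightarrow> p s \<in> M"
  unfolding geodesic_on_def by blast

lemma geodesic_on_reflect:
  "geodesic_on M d {u0..u1} h \<Longrightarrow> geodesic_on M d {-u1..-u0} (\<lambda>u. h (-u))"
  unfolding geodesic_on_def by (auto simp: image_subset_iff)

lemma morse_gauge_nonneg: "morse_gauge N \<Longrightarrow> 1 \<le> K \<Longrightarrow> 0 \<le> C \<Longrightarrow> 0 \<le> N K C"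
  unfolding morse_gauge_def by blast

lemma exists_switch_index: "P 0 \<Longrightarrow> \<not> P n \<Longrightarrow> \<exists>i<n. P i \<and> \<not> P (Suc i)"
  by (induction n) (auto simp: less_Suc_eq)

lemma mnbhd_mono: "r \<le> r' \<Longrightarrow> mnbhd M d r S \<subseteq> mnbhd M d r' S"
  unfolding mnbhd_def by (auto intro: order_trans)

lemma mhausdist_le:
  assumes "\<And>s. s \<in> S \<Longrightarrow> \<exists>t\<in>T. d s t \<le> r" and "\<And>t. t \<in> T \<Longrightarrow> \<exists>s\<in>S. d s t \<le> r"
  shows "mhausdist d S T \<le> ereal r"
proof -
  have "(INF t\<in>T. ereal (d s t)) \<le> ereal r" if "s \<in> S" for s
    using assms(1)[OF that] by (meson INF_lower2 ereal_less_eq(3))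
  moreover have "(INF s\<in>S. ereal (d s t)) \<le> ereal r" if "t \<in> T" for t
    using assms(2)[OF that] by (meson INF_lower2 ereal_less_eq(3))
  ultimately show ?thesis unfolding mhausdist_def by (simp add: SUP_least)
qed

lemma morse_boundary_common_representative:
  assumes "L \<in> morse_boundary M d N e" "x \<in> L" "x' \<in> L"
  shows "\<exists>z. range z \<subseteq> morse_stratum M d N e \<and> equiv_at_infinity d e z x \<and> equiv_at_infinity d e z x'"
  using assms unfolding morse_boundary_def stratum_seqs_at_infinity_def by blast

context Metric_space
begin

lemma geodesic_on_closest_point:
  assumes h: "geodesic_on M d {u0..u1} h" and "u0 \<le> u1" and e: "e \<in> M"
  obtains up where "up \<in> {u0..u1}" "\<And>u. u \<in> {u0..u1} \<Longrightarrow> d e (h up) \<le> d e (h u)"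
proof -
  have "1-lipschitz_on {u0..u1} (\<lambda>u. d e (h u))"
  proof (rule lipschitz_onI)
    fix s t assume "s \<in> {u0..u1}" "t \<in> {u0..u1}"
    with h e mdist_reverse_triangle[of "h s" e "h t"]
    show "dist (d e (h s)) (d e (h t)) \<le> 1 * dist s t"
      by (simp add: dist_real_def geodesic_on_mem geodesic_on_dist commute)
  qed simp
  then show thesis
    using continuous_attains_inf[OF compact_Icc] lipschitz_on_continuous_on \<open>u0 \<le> u1\<close> that
    by (metis atLeastAtMost_iff empty_iff order_refl)
qed

lemma geodesic_from_param_close:
  assumes a: "geodesic_on M d {0..L} a" "a 0 = e" and z: "z \<in> M" and \<sigma>: "\<sigma> \<in> {0..L}"
  shows "\<bar>\<sigma> - d e z\<bar> \<le> d z (a \<sigma>)"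
  using mdist_reverse_triangle[OF z geodesic_on_mem[OF a(1), of 0] geodesic_on_mem[OF a(1) \<sigma>]]
    geodesic_on_dist[OF a(1), of 0 \<sigma>] \<sigma> a(2) commute by auto

lemma geodesic_from_near:
  assumes a: "geodesic_on M d {0..L} a" "a 0 = e" and z: "z \<in> M"
    and \<sigma>: "\<sigma> \<in> {0..L}" and s: "s \<in> {0..L}"
  shows "d z (a s) \<le> 2 * d z (a \<sigma>) + \<bar>s - d e z\<bar>"
proof -
  have "d z (a s) \<le> d z (a \<sigma>) + \<bar>\<sigma> - s\<bar>"
    using triangle[OF z geodesic_on_mem[OF a(1) \<sigma>] geodesic_on_mem[OF a(1) s]]
      geodesic_on_dist[OF a(1) \<sigma> s] by simp
  then show ?thesis using geodesic_from_param_close[OF a z \<sigma>] by linarith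
qed

lemma gromov_product_commute: "gromov_product d e x y = gromov_product d e y x"
  unfolding gromov_product_def by (simp add: commute)

lemma gromov_product_le_dist: "e \<in> M \<Longrightarrow> x \<in> M \<Longrightarrow> y \<in> M \<Longrightarrow> gromov_product d e x y \<le> d e x"
  unfolding gromov_product_def using triangle[of e x y] by simp

lemma gromov_product_le_dist_geodesic:
  assumes h: "geodesic_on M d {u0..u1} h" and t: "t \<in> {u0..u1}" and e: "e \<in> M"
  shows "gromov_product d e (h u0) (h u1) \<le> d e (h t)"
proof -
  have ends: "u0 \<in> {u0..u1}" "u1 \<in> {u0..u1}" using t by auto
  have "d (h u0) (h u1) = d (h u0) (h t) + d (h t) (h u1)"
    using t by (simp add: geodesic_on_dist[OF h] ends)
  moreover have "d e (h u0) \<le> d e (h t) + d (h u0) (h t)" "d e (h u1) \<le> d e (h t) + d (h t) (h u1)"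
    using triangle triangle' e geodesic_on_mem[OF h] t ends by blast+
  ultimately show ?thesis unfolding gromov_product_def by simp
qed

lemma gromov_product_ge_near_legs:
  assumes a: "geodesic_on M d {0..La} a" "a 0 = e" and b: "geodesic_on M d {0..Lb} b" "b 0 = e"
    and MPQ: "e \<in> M" "P \<in> M" "Q \<in> M"
    and T: "\<sigma> \<in> {0..T}" "T \<le> La" "T \<le> Lb"
    and P: "d (a T) P \<le> \<rho>" and Q: "d (b T) Q \<le> \<rho>" and \<sigma>: "d (a \<sigma>) (b \<sigma>) \<le> E"
  shows "\<sigma> - 2 * \<rho> - E / 2 \<le> gromov_product d e P Q"
proof -
  have ins: "\<sigma> \<in> {0..La}" "T \<in> {0..La}" "\<sigma> \<in> {0..Lb}" "T \<in> {0..Lb}" using T by auto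
  note aM = geodesic_on_mem[OF a(1)] and bM = geodesic_on_mem[OF b(1)]
  have "d e (a T) = T" "d e (b T) = T"
    using geodesic_on_dist[OF a(1), of 0 T] geodesic_on_dist[OF b(1), of 0 T] a(2) b(2) ins by auto
  moreover have "d (a T) (a \<sigma>) = T - \<sigma>" "d (b \<sigma>) (b T) = T - \<sigma>"
    using geodesic_on_dist[OF a(1)] geodesic_on_dist[OF b(1)] ins T by auto
  moreover have "d e (a T) \<le> d e P + d P (a T)" "d e (b T) \<le> d e Q + d Q (b T)"
    using triangle MPQ aM bM ins by blast+
  moreover have "d P Q \<le> d P (a T) + d (a T) (a \<sigma>) + d (a \<sigma>) (b \<sigma>) + d (b \<sigma>) (b T) + d (b T) Q"
    using MPQ aM[OF ins(1)] aM[OF ins(2)] bM[OF ins(3)] bM[OF ins(4)] triangle by (smt (verit))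
  ultimately show ?thesis
    using P Q \<sigma> commute[of P "a T"] commute[of Q "b T"] unfolding gromov_product_def
    by (simp add: field_simps)
qed

lemma morse_geodesic_fromD:
  assumes "morse_geodesic_from M d N e X a"
  shows morse_geodesic_from_geodesic: "geodesic_on M d {0..d e X} a"
    and morse_geodesic_from_start: "a 0 = e"
    and morse_geodesic_from_end: "a (d e X) = X"
    and morse_geodesic_from_morse: "morse_set M d N (a ` {0..d e X})"
  using assms unfolding morse_geodesic_from_def geodesic_segment_def by auto

lemma morse_geodesic_from_mem:
  "morse_geodesic_from M d N e X a \<Longrightarrow> s \<in> {0..d e X} \<Longrightarrow> a s \<in> M"
  using geodesic_on_mem morse_geodesic_from_geodesic by blast

lemma morse_geodesic_from_target_mem:
  assumes "morse_geodesic_from M d N e X a"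
  shows "X \<in> M"
  using morse_geodesic_from_mem[OF assms, of "d e X"] morse_geodesic_from_end[OF assms] by simp

lemma morse_geodesic_from_image:
  assumes a: "morse_geodesic_from M d N e X a"
  shows "morse_set M d N (a ` {0..d e X})" "a ` {0..d e X} \<subseteq> M" "e \<in> a ` {0..d e X}"
    "X \<in> a ` {0..d e X}"
proof -
  show "morse_set M d N (a ` {0..d e X})" using morse_geodesic_from_morse[OF a] .
  show "a ` {0..d e X} \<subseteq> M" using morse_geodesic_from_mem[OF a] by blast
  show "e \<in> a ` {0..d e X}" using morse_geodesic_from_start[OF a] by (auto intro: image_eqI[of _ _ 0])
  show "X \<in> a ` {0..d e X}" using morse_geodesic_from_end[OF a] by (auto intro: image_eqI[of _ _ "d e X"])
qed

section \<open>Detours through the closest point\<close>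

lemma detour_via_closest_point:
  assumes M: "x \<in> M" "y \<in> M" "p \<in> M" "e \<in> M"
    and x: "d e x + d x p = d e p" and p: "d e p \<le> d e y"
  shows "d x p + d p y \<le> 3 * d x y"
  using triangle[OF M(4) M(1) M(2)] triangle[OF M(3) M(1) M(2)] commute[of x p] x p by linarith

lemma detour_quasigeodesic:
  assumes e: "e \<in> M" and h: "geodesic_on M d {u0..u1} h" and up: "up \<in> {u0..u1}"
    and closest: "\<And>u. u \<in> {u0..u1} \<Longrightarrow> d e (h up) \<le> d e (h u)"
    and c: "geodesic_segment M d 0 (d e (h up)) c e (h up)"
  shows "quasigeodesic M d 3 0 0 (d e (h up) + (up - u0))
           (\<lambda>t. if t \<le> d e (h up) then c t else h (up - (t - d e (h up))))"
    (is "quasigeodesic M d 3 0 0 ?b ?q")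
proof -
  define l where "l = d e (h up)"
  have c': "geodesic_on M d {0..l} c" "c 0 = e" "c l = h up"
    using c unfolding geodesic_segment_def l_def by auto
  have hpar: "up - (t - l) \<in> {u0..u1}" if "t \<in> {l..?b}" for t
    using up that unfolding l_def by auto
  have hside: "?q t = h (up - (t - l))" if "t \<in> {l..?b}" for t
    using that c'(3) unfolding l_def by auto
  have qM: "?q t \<in> M" if "t \<in> {0..?b}" for t
    using that geodesic_on_mem[OF c'(1)] geodesic_on_mem[OF h hpar] unfolding l_def by force
  have ordered: "\<bar>s - t\<bar> / 3 \<le> d (?q s) (?q t) \<and> d (?q s) (?q t) \<le> \<bar>s - t\<bar>"
    if st: "s \<in> {0..?b}" "t \<in> {0..?b}" "s \<le> t" for s t
  proof (cases "t \<le> l")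
    case True
    then show ?thesis using st geodesic_on_dist[OF c'(1), of s t] unfolding l_def by auto
  next
    case tl: False
    show ?thesis
    proof (cases "l \<le> s")
      case True
      then show ?thesis
        using st tl hside[of s] hside[of t] geodesic_on_dist[OF h hpar[of s] hpar[of t]] by auto
    next
      case False
      have x: "c s \<in> M" "d e (c s) = s" "d (c s) (h up) = l - s"
        using False st geodesic_on_mem[OF c'(1)] geodesic_on_dist[OF c'(1), of 0 s]
          geodesic_on_dist[OF c'(1), of s l] c'(2,3) by auto
      have y: "h (up - (t - l)) \<in> M" "d (h up) (h (up - (t - l))) = t - l"
        "d e (h up) \<le> d e (h (up - (t - l)))"
        using st tl geodesic_on_mem[OF h hpar] geodesic_on_dist[OF h up hpar] closest hpar
        by auto
      have "d (c s) (h up) + d (h up) (h (up - (t - l))) \<le> 3 * d (c s) (h (up - (t - l)))"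
        using detour_via_closest_point[OF x(1) y(1) geodesic_on_mem[OF h up] e] x y
        unfolding l_def by simp
      moreover have "d (c s) (h (up - (t - l))) \<le> d (c s) (h up) + d (h up) (h (up - (t - l)))"
        using triangle x(1) y(1) geodesic_on_mem[OF h up] by blast
      ultimately show ?thesis
        using False st tl x y hside[of t] unfolding l_def by auto
    qed
  qed
  show ?thesis
    unfolding quasigeodesic_def
  proof (intro conjI ballI)
    show "0 \<le> ?b" using up by simp
    show "?q ` {0..?b} \<subseteq> M" using qM by blast
  next
    fix s t assume st: "s \<in> {0..?b}" "t \<in> {0..?b}"
    then have "\<bar>s - t\<bar> / 3 \<le> d (?q s) (?q t) \<and> d (?q s) (?q t) \<le> \<bar>s - t\<bar>"
      using ordered[of s t] ordered[of t s] commute by (cases "s \<le> t") (auto simp: abs_minus_commute)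
    then show "\<bar>s - t\<bar> / 3 - 0 \<le> d (?q s) (?q t)" "d (?q s) (?q t) \<le> 3 * \<bar>s - t\<bar> + 0"
      by auto
  qed
qed

lemma quasigeodesic_perturb_endpoint:
  assumes q: "quasigeodesic M d K 0 a b q" and w: "w \<in> M" "d w (q b) \<le> C"
  shows "quasigeodesic M d K C a b (q(b := w))"
proof -
  have qM: "q t \<in> M" if "t \<in> {a..b}" for t using q that unfolding quasigeodesic_def by auto
  have b: "b \<in> {a..b}" using q unfolding quasigeodesic_def by auto
  have moved: "\<bar>d w (q t) - d (q b) (q t)\<bar> \<le> C" if "t \<in> {a..b}" for t
    using w mdist_reverse_triangle[OF w(1) qM[OF b] qM[OF that]]
      triangle[OF w(1) qM[OF b] qM[OF that]] by (auto simp: abs_le_iff)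
  have "0 \<le> C" using w(2) nonneg[of w "q b"] by linarith
  have close: "\<bar>d ((q(b := w)) s) ((q(b := w)) t) - d (q s) (q t)\<bar> \<le> C"
    if "s \<in> {a..b}" "t \<in> {a..b}" for s t
    using moved[OF that(1)] moved[OF that(2)] \<open>0 \<le> C\<close> commute qM[OF b] w(1)
    by (cases "s = b"; cases "t = b") auto
  show ?thesis
    unfolding quasigeodesic_def
  proof (intro conjI ballI)
    show "a \<le> b" using b by simp
    show "(q(b := w)) ` {a..b} \<subseteq> M" using qM w(1) by auto
  next
    fix s t assume st: "s \<in> {a..b}" "t \<in> {a..b}"
    then have "\<bar>s - t\<bar> / K \<le> d (q s) (q t)" "d (q s) (q t) \<le> K * \<bar>s - t\<bar>"
      using q unfolding quasigeodesic_def by auto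
    with close[OF st]
    show "\<bar>s - t\<bar> / K - C \<le> d ((q(b := w)) s) ((q(b := w)) t)"
      "d ((q(b := w)) s) ((q(b := w)) t) \<le> K * \<bar>s - t\<bar> + C"
      by (auto simp: abs_le_iff)
  qed
qed

text \<open>The detour, with its endpoint h u0 moved to w, is a (3,1)-quasigeodesic with both
  endpoints in S.\<close>
lemma morse_set_near_detour:
  assumes N: "morse_gauge N" and S: "morse_set M d N S" "S \<subseteq> M" and e: "e \<in> S"
    and h: "geodesic_on M d {u0..u1} h" and up: "up \<in> {u0..u1}"
    and closest: "\<And>u. u \<in> {u0..u1} \<Longrightarrow> d e (h up) \<le> d e (h u)"
    and c: "geodesic_segment M d 0 (d e (h up)) c e (h up)"
    and w: "w \<in> S" "d w (h u0) \<le> 1"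
  shows "h ` {u0..up} \<subseteq> mnbhd M d (N 3 1 + 1) S"
    and "c ` {0..d e (h up)} \<subseteq> mnbhd M d (N 3 1 + 1) S"
proof -
  define l where "l = d e (h up)"
  define b where "b = l + (up - u0)"
  define q where "q = (\<lambda>t. if t \<le> l then c t else h (up - (t - l)))"
  have c': "c 0 = e" "c l = h up" using c unfolding geodesic_segment_def l_def by auto
  have qg: "quasigeodesic M d 3 0 0 b q"
    using detour_quasigeodesic[OF _ h up closest c] e S(2) unfolding q_def b_def l_def by blast
  have qb: "q b = h u0"
    using up c'(2) unfolding q_def b_def by (cases "up = u0") auto
  have wM: "w \<in> M" using w S(2) by blast
  have "quasigeodesic M d 3 1 0 b (q(b := w))"
    using quasigeodesic_perturb_endpoint[OF qg wM] w(2) qb by simp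
  moreover have "(q(b := w)) 0 \<in> S" "(q(b := w)) b \<in> S"
    using e w c'(1) unfolding q_def l_def by auto
  ultimately have "(q(b := w)) ` {0..b} \<subseteq> mnbhd M d (N 3 1) S"
    using S(1) unfolding morse_set_def by (metis one_le_numeral zero_le_one)
  moreover have "q b \<in> mnbhd M d (N 3 1 + 1) S"
  proof -
    have "0 \<le> N 3 1" using morse_gauge_nonneg[OF N, of 3 1] by simp
    then show ?thesis
      using w wM qb geodesic_on_mem[OF h, of u0] up commute[of w] unfolding mnbhd_def
      by (auto intro!: bexI[of _ w])
  qed
  ultimately have near: "q t \<in> mnbhd M d (N 3 1 + 1) S" if "t \<in> {0..b}" for t
    using that mnbhd_mono[of "N 3 1" "N 3 1 + 1" M d S] by (cases "t = b") (auto simp: image_subset_iff)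
  have "h u = q (l + (up - u))" if "u \<in> {u0..up}" for u
    using that c'(2) unfolding q_def by auto
  moreover have "l + (up - u) \<in> {0..b}" if "u \<in> {u0..up}" for u
    using that unfolding b_def l_def by auto
  ultimately show "h ` {u0..up} \<subseteq> mnbhd M d (N 3 1 + 1) S"
    using near by (simp add: image_subset_iff)
  have "c t = q t" "t \<in> {0..b}" if "t \<in> {0..l}" for t
    using that up unfolding q_def b_def by auto
  then show "c ` {0..d e (h up)} \<subseteq> mnbhd M d (N 3 1 + 1) S"
    using near unfolding l_def by (simp add: image_subset_iff)
qed

lemma morse_set_near_detour_reflected:
  assumes N: "morse_gauge N" and S: "morse_set M d N S" "S \<subseteq> M" and e: "e \<in> S"
    and h: "geodesic_on M d {u0..u1} h" and up: "up \<in> {u0..u1}"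
    and closest: "\<And>u. u \<in> {u0..u1} \<Longrightarrow> d e (h up) \<le> d e (h u)"
    and c: "geodesic_segment M d 0 (d e (h up)) c e (h up)"
    and w: "w \<in> S" "d w (h u1) \<le> 1"
  shows "h ` {up..u1} \<subseteq> mnbhd M d (N 3 1 + 1) S"
    and "c ` {0..d e (h up)} \<subseteq> mnbhd M d (N 3 1 + 1) S"
proof -
  have closest': "d e (h (- (- up))) \<le> d e (h (- u))" if "u \<in> {-u1..-u0}" for u
    using closest that by simp
  have up': "- up \<in> {-u1..-u0}" using up by simp
  have c': "geodesic_segment M d 0 (d e (h (- (- up)))) c e (h (- (- up)))" using c by simp
  note reflected = morse_set_near_detour[OF N S e geodesic_on_reflect[OF h] up' closest' c' w(1)]
  have "(\<lambda>u. h (- u)) ` {-u1..-up} = h ` {up..u1}"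
    using image_comp[of h uminus "{-u1..-up}"] by (simp add: o_def)
  then show "h ` {up..u1} \<subseteq> mnbhd M d (N 3 1 + 1) S"
    using reflected(1) up w(2) by simp
  show "c ` {0..d e (h up)} \<subseteq> mnbhd M d (N 3 1 + 1) S"
    using reflected(2) up w(2) c by simp
qed

lemma morse_geodesics_fellow_travel:
  assumes N: "morse_gauge N" and e: "e \<in> M" and geo: "geodesic_mspace M d"
    and a: "morse_geodesic_from M d N e X a" and b: "morse_geodesic_from M d N e Z b"
    and s: "0 \<le> s" "s \<le> gromov_product d e X Z"
  shows "d (a s) (b s) \<le> 4 * (N 3 1 + 1)"
proof -
  have XZ: "X \<in> M" "Z \<in> M" using a b morse_geodesic_from_target_mem by blast+
  obtain h where "geodesic_segment M d 0 (d X Z) h X Z"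
    using geo XZ unfolding geodesic_mspace_def by blast
  then have h: "geodesic_on M d {0..d X Z} h" "h 0 = X" "h (d X Z) = Z"
    unfolding geodesic_segment_def by auto
  obtain up where up: "up \<in> {0..d X Z}" and closest: "\<And>u. u \<in> {0..d X Z} \<Longrightarrow> d e (h up) \<le> d e (h u)"
    using geodesic_on_closest_point[OF h(1) _ e] by auto
  obtain c where c: "geodesic_segment M d 0 (d e (h up)) c e (h up)"
    using geo e geodesic_on_mem[OF h(1) up] unfolding geodesic_mspace_def by blast
  note Sa = morse_geodesic_from_image[OF a] and Sb = morse_geodesic_from_image[OF b]
  have near_a: "c ` {0..d e (h up)} \<subseteq> mnbhd M d (N 3 1 + 1) (a ` {0..d e X})"
    using morse_set_near_detour(2)[OF N Sa(1,2,3) h(1) up closest c Sa(4)] h(2) XZ by simp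
  have near_b: "c ` {0..d e (h up)} \<subseteq> mnbhd M d (N 3 1 + 1) (b ` {0..d e Z})"
    using morse_set_near_detour_reflected(2)[OF N Sb(1,2,3) h(1) up closest c Sb(4)] h(3) XZ
    by simp
  have "s \<le> d e (h up)"
    using s gromov_product_le_dist_geodesic[OF h(1) up e] h by simp
  moreover have "d e (h up) \<le> d e X" "d e (h up) \<le> d e Z"
    using closest[of 0] closest[of "d X Z"] h by auto
  ultimately have sin: "s \<in> {0..d e (h up)}" "s \<in> {0..d e X}" "s \<in> {0..d e Z}"
    using s by auto
  have c': "geodesic_on M d {0..d e (h up)} c" "c 0 = e"
    using c unfolding geodesic_segment_def by auto
  have cs: "c s \<in> M" "d e (c s) = s"
    using geodesic_on_mem[OF c'(1) sin(1)] geodesic_on_dist[OF c'(1), of 0 s] sin c'(2) by auto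
  have "d (c s) (a s) \<le> 2 * (N 3 1 + 1)" "d (c s) (b s) \<le> 2 * (N 3 1 + 1)"
  proof -
    obtain \<sigma> \<tau> where "\<sigma> \<in> {0..d e X}" "d (c s) (a \<sigma>) \<le> N 3 1 + 1"
      and "\<tau> \<in> {0..d e Z}" "d (c s) (b \<tau>) \<le> N 3 1 + 1"
      using near_a near_b sin(1) unfolding mnbhd_def by blast
    with geodesic_from_near[OF morse_geodesic_from_geodesic[OF a] morse_geodesic_from_start[OF a] cs(1)]
      geodesic_from_near[OF morse_geodesic_from_geodesic[OF b] morse_geodesic_from_start[OF b] cs(1)]
    show "d (c s) (a s) \<le> 2 * (N 3 1 + 1)" "d (c s) (b s) \<le> 2 * (N 3 1 + 1)"
      using sin cs(2) by fastforce+
  qed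
  then show ?thesis
    using triangle'' cs(1) morse_geodesic_from_mem[OF a sin(2)] morse_geodesic_from_mem[OF b sin(3)]
    by (smt (verit))
qed

text \<open>A discrete intermediate value argument: some p i is close to some a \<sigma> with \<sigma> \<le> s
  while p (Suc i) is only close to parameters beyond s.\<close>
lemma chain_passes_near_geodesic_point:
  assumes a: "geodesic_on M d {0..L} a" "a 0 = e" and e: "e \<in> M"
    and p: "\<And>i. i \<le> n \<Longrightarrow> p i \<in> M"
    and steps: "\<And>i. i < n \<Longrightarrow> d (p i) (p (Suc i)) \<le> \<delta>" and "0 \<le> \<delta>"
    and near: "\<And>i. i \<le> n \<Longrightarrow> \<exists>\<sigma>\<in>{0..L}. d (p i) (a \<sigma>) \<le> D"
    and start: "d e (p 0) \<le> s"
    and m: "m \<in> {0..L}" "s \<le> m" "d (a m) (p n) \<le> \<rho>"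
  shows "\<exists>i\<le>n. d (a s) (p i) \<le> 3 * D + \<delta> + 2 * \<rho>"
proof -
  have s: "s \<in> {0..L}" using order_trans[OF nonneg start] m by auto
  have aM: "a \<sigma> \<in> M" if "\<sigma> \<in> {0..L}" for \<sigma> using geodesic_on_mem[OF a(1) that] .
  have via: "d (a s) (p i) \<le> \<bar>s - \<sigma>\<bar> + d (p i) (a \<sigma>)" if "\<sigma> \<in> {0..L}" "i \<le> n" for \<sigma> i
    using triangle'[OF aM[OF s] aM[OF that(1)] p[OF that(2)]] geodesic_on_dist[OF a(1) s that(1)] by simp
  have D: "0 \<le> D" using near[of 0] nonneg by (meson atLeastAtMost_iff order_trans zero_le)
  have \<rho>: "0 \<le> \<rho>" using m(3) nonneg order_trans by blast
  define Q where "Q i \<longleftrightarrow> (\<exists>\<sigma>\<in>{0..L}. \<sigma> \<le> s \<and> d (p i) (a \<sigma>) \<le> D)" for i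
  consider "\<not> Q 0" | "Q n" | i where "i < n" "Q i" "\<not> Q (Suc i)"
    using exists_switch_index[of Q n] by blast
  then show ?thesis
  proof cases
    case 1
    obtain \<sigma> where \<sigma>: "\<sigma> \<in> {0..L}" "d (p 0) (a \<sigma>) \<le> D" using near[of 0] by blast
    with 1 have "s < \<sigma>" unfolding Q_def by (meson not_le)
    moreover have "\<sigma> \<le> d e (p 0) + D"
      using geodesic_from_param_close[OF a p[of 0] \<sigma>(1)] \<sigma>(2) by auto
    ultimately show ?thesis using via[OF \<sigma>(1), of 0] \<sigma>(2) start D \<open>0 \<le> \<delta>\<close> \<rho> by auto
  next
    case 2
    then obtain \<sigma> where \<sigma>: "\<sigma> \<in> {0..L}" "\<sigma> \<le> s" "d (p n) (a \<sigma>) \<le> D" unfolding Q_def by blast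
    have "m - \<sigma> \<le> d (a m) (p n) + d (p n) (a \<sigma>)"
      using triangle[OF aM[OF m(1)] p[of n] aM[OF \<sigma>(1)]] geodesic_on_dist[OF a(1) m(1) \<sigma>(1)] \<sigma> m by simp
    moreover have "d (a s) (p n) \<le> (m - s) + d (a m) (p n)"
      using triangle[OF aM[OF s] aM[OF m(1)] p[of n]] geodesic_on_dist[OF a(1) s m(1)] m by simp
    ultimately show ?thesis using \<sigma> m D \<open>0 \<le> \<delta>\<close> by (intro exI[of _ n]) auto
  next
    case 3
    then obtain \<sigma>1 \<sigma>2 where \<sigma>1: "\<sigma>1 \<in> {0..L}" "\<sigma>1 \<le> s" "d (p i) (a \<sigma>1) \<le> D"
      and \<sigma>2: "\<sigma>2 \<in> {0..L}" "d (p (Suc i)) (a \<sigma>2) \<le> D" "s < \<sigma>2"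
      unfolding Q_def using near[of "Suc i"] by force
    have "\<sigma>2 - \<sigma>1 \<le> d (p i) (a \<sigma>1) + d (p i) (p (Suc i)) + d (p (Suc i)) (a \<sigma>2)"
      using triangle[OF aM[OF \<sigma>1(1)] p[of i] p[of "Suc i"]] triangle[OF aM[OF \<sigma>1(1)] p[of "Suc i"] aM[OF \<sigma>2(1)]]
        geodesic_on_dist[OF a(1) \<sigma>1(1) \<sigma>2(1)] commute[of "a \<sigma>1" "p i"] \<open>i < n\<close> by simp
    then show ?thesis
      using via[OF \<sigma>1(1), of i] steps[OF \<open>i < n\<close>] \<sigma>1 \<sigma>2 \<open>i < n\<close> \<rho> by (intro exI[of _ i]) auto
  qed
qed

lemma morse_geodesic_shadowed_by_geodesic:
  assumes N: "morse_gauge N" and e: "e \<in> M" and geo: "geodesic_mspace M d"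
    and a: "morse_geodesic_from M d N e X a"
    and h: "geodesic_on M d {u0..u1} h" and up: "up \<in> {u0..u1}"
    and closest: "\<And>u. u \<in> {u0..u1} \<Longrightarrow> d e (h up) \<le> d e (h u)"
    and m: "m \<in> {0..d e X}" "d (a m) (h u0) \<le> 1"
    and s: "d e (h up) \<le> s" "s \<le> m"
  shows "\<exists>u\<in>{u0..up}. d (a s) (h u) \<le> 3 * (N 3 1 + 1) + 5 / 2"
proof -
  obtain c where c: "geodesic_segment M d 0 (d e (h up)) c e (h up)"
    using geo e geodesic_on_mem[OF h up] unfolding geodesic_mspace_def by blast
  note S = morse_geodesic_from_image[OF a]
  have near: "h ` {u0..up} \<subseteq> mnbhd M d (N 3 1 + 1) (a ` {0..d e X})"
    using morse_set_near_detour(1)[OF N S(1-3) h up closest c _ m(2)] m(1) by blast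
  define l where "l = up - u0"
  define n where "n = nat \<lceil>2 * l\<rceil> + 1"
  define v where "v i = up - real i * l / real n" for i
  have l: "0 \<le> l" "2 * l < real n" "0 < n" using up unfolding l_def n_def by auto linarith
  have v: "v i \<in> {u0..up}" if "i \<le> n" for i
  proof -
    have "real i * l / real n \<le> l"
      using that l by (simp add: divide_le_eq mult_left_mono mult.commute)
    then show ?thesis using l unfolding v_def l_def by auto
  qed
  have hv: "h (v i) \<in> M" if "i \<le> n" for i
    using v[OF that] up geodesic_on_mem[OF h] by (meson atLeastAtMost_iff order_trans)
  have "\<exists>i\<le>n. d (a s) (h (v i)) \<le> 3 * (N 3 1 + 1) + 1 / 2 + 2 * 1"
  proof (rule chain_passes_near_geodesic_point[OF morse_geodesic_from_geodesic[OF a]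
        morse_geodesic_from_start[OF a] e hv])
    fix i assume "i < n"
    then have "d (h (v i)) (h (v (Suc i))) = \<bar>v i - v (Suc i)\<bar>"
      using geodesic_on_dist[OF h] v[of i] v[of "Suc i"] up by simp
    also have "\<dots> = l / real n" using l by (simp add: v_def add_divide_distrib algebra_simps)
    also have "\<dots> \<le> 1 / 2" using l by (simp add: divide_le_eq)
    finally show "d (h (v i)) (h (v (Suc i))) \<le> 1 / 2" .
  next
    fix i assume "i \<le> n"
    then show "\<exists>\<sigma>\<in>{0..d e X}. d (h (v i)) (a \<sigma>) \<le> N 3 1 + 1"
      using near v unfolding mnbhd_def by blast
  next
    show "d e (h (v 0)) \<le> s" using s by (simp add: v_def)
    show "d (a m) (h (v n)) \<le> 1" using m l by (simp add: v_def l_def)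
  qed (use m s in auto)
  then show ?thesis using v by force
qed

lemma closest_point_between_morse_legs:
  assumes N: "morse_gauge N" and e: "e \<in> M" and geo: "geodesic_mspace M d"
    and a: "morse_geodesic_from M d N e X a" and b: "morse_geodesic_from M d N e Y b"
    and h: "geodesic_on M d {u0..u1} h" and up: "up \<in> {u0..u1}"
    and closest: "\<And>u. u \<in> {u0..u1} \<Longrightarrow> d e (h up) \<le> d e (h u)"
    and m: "0 \<le> m" "m + 1 \<le> d e X" "m + 1 \<le> d e Y"
    and ends: "d (a m) (h u0) \<le> 1" "d (b m) (h u1) \<le> 1"
  shows "d e (h up) \<le> m + 1"
    and "d (h up) (a (d e (h up))) \<le> 2 * (N 3 1 + 1)"
    and "d (h up) (b (d e (h up))) \<le> 2 * (N 3 1 + 1)"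
proof -
  have amM: "a m \<in> M" using morse_geodesic_from_mem[OF a] m by simp
  have "d e (a m) = m"
    using geodesic_on_dist[OF morse_geodesic_from_geodesic[OF a], of 0 m] morse_geodesic_from_start[OF a] m
    by simp
  then show lm: "d e (h up) \<le> m + 1"
    using closest[of u0] up triangle[OF e amM geodesic_on_mem[OF h, of u0]] ends(1) by auto
  obtain c where c: "geodesic_segment M d 0 (d e (h up)) c e (h up)"
    using geo e geodesic_on_mem[OF h up] unfolding geodesic_mspace_def by blast
  have upM: "h up \<in> M" using geodesic_on_mem[OF h up] .
  note Sa = morse_geodesic_from_image[OF a] and Sb = morse_geodesic_from_image[OF b]
  have "h up \<in> mnbhd M d (N 3 1 + 1) (a ` {0..d e X})"
    using morse_set_near_detour(1)[OF N Sa(1-3) h up closest c _ ends(1)] m up by auto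
  then obtain \<tau> where "\<tau> \<in> {0..d e X}" "d (h up) (a \<tau>) \<le> N 3 1 + 1"
    unfolding mnbhd_def by blast
  then show "d (h up) (a (d e (h up))) \<le> 2 * (N 3 1 + 1)"
    using geodesic_from_near[OF morse_geodesic_from_geodesic[OF a] morse_geodesic_from_start[OF a] upM,
        of \<tau> "d e (h up)"] lm m by auto
  have "h up \<in> mnbhd M d (N 3 1 + 1) (b ` {0..d e Y})"
    using morse_set_near_detour_reflected(1)[OF N Sb(1-3) h up closest c _ ends(2)] m up by auto
  then obtain \<tau> where "\<tau> \<in> {0..d e Y}" "d (h up) (b \<tau>) \<le> N 3 1 + 1"
    unfolding mnbhd_def by blast
  then show "d (h up) (b (d e (h up))) \<le> 2 * (N 3 1 + 1)"
    using geodesic_from_near[OF morse_geodesic_from_geodesic[OF b] morse_geodesic_from_start[OF b] upM,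
        of \<tau> "d e (h up)"] lm m by auto
qed

lemma closest_point_dist_le_between_fellow_legs:
  assumes N: "morse_gauge N" and e: "e \<in> M" and geo: "geodesic_mspace M d"
    and a: "morse_geodesic_from M d N e X a" and b: "morse_geodesic_from M d N e Y b"
    and a': "morse_geodesic_from M d N e X' a'" and b': "morse_geodesic_from M d N e Y' b'"
    and h: "geodesic_on M d {u0..u1} h"
    and ends: "d (a T) (h u0) \<le> 1" "d (b T) (h u1) \<le> 1" "T \<le> d e X" "T \<le> d e Y"
    and h': "geodesic_on M d {u0'..u1'} h'" and up': "up' \<in> {u0'..u1'}"
    and closest': "\<And>u. u \<in> {u0'..u1'} \<Longrightarrow> d e (h' up') \<le> d e (h' u)"
    and ends': "d (a' m) (h' u0') \<le> 1" "d (b' m) (h' u1') \<le> 1" "m + 1 \<le> d e X'" "m + 1 \<le> d e Y'"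
    and fellow: "\<And>s. s \<in> {0..m + 1} \<Longrightarrow> d (a s) (a' s) \<le> F \<and> d (b s) (b' s) \<le> F"
    and m: "0 \<le> m" "m + 1 \<le> T" and t: "t \<in> {u0..u1}"
  shows "d e (h' up') - 2 - F - 2 * (N 3 1 + 1) \<le> d e (h t)"
proof -
  define D where "D = N 3 1 + 1"
  define \<sigma>' where "\<sigma>' = d e (h' up')"
  note legs' = closest_point_between_morse_legs[OF N e geo a' b' h' up' closest' m(1) ends'(3,4) ends'(1,2),
      folded \<sigma>'_def D_def]
  have \<sigma>': "\<sigma>' \<in> {0..m + 1}" using legs'(1) unfolding \<sigma>'_def by simp
  have "d (a \<sigma>') (b \<sigma>') \<le> 2 * F + 4 * D"
  proof -
    have "\<sigma>' \<in> {0..d e X}" "\<sigma>' \<in> {0..d e Y}" "\<sigma>' \<in> {0..d e X'}" "\<sigma>' \<in> {0..d e Y'}"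
      using \<sigma>' m ends ends' by auto
    then have "a \<sigma>' \<in> M" "b \<sigma>' \<in> M" "a' \<sigma>' \<in> M" "b' \<sigma>' \<in> M" "h' up' \<in> M"
      using a b a' b' morse_geodesic_from_mem geodesic_on_mem[OF h' up'] by blast+
    then show ?thesis
      using fellow[OF \<sigma>'] legs'(2,3) triangle commute by (smt (verit))
  qed
  then have "\<sigma>' - 2 * 1 - (2 * F + 4 * D) / 2 \<le> gromov_product d e (h u0) (h u1)"
    using gromov_product_ge_near_legs[OF morse_geodesic_from_geodesic[OF a] morse_geodesic_from_start[OF a]
        morse_geodesic_from_geodesic[OF b] morse_geodesic_from_start[OF b] e _ _ _ ends(3,4) ends(1,2)]
      geodesic_on_mem[OF h] \<sigma>' m t by auto
  also have "\<dots> \<le> d e (h t)" using gromov_product_le_dist_geodesic[OF h t e] .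
  finally show ?thesis unfolding \<sigma>'_def D_def by (simp add: field_simps)
qed

lemma fellow_legs_geodesics_close_half:
  assumes N: "morse_gauge N" and e: "e \<in> M" and geo: "geodesic_mspace M d"
    and a: "morse_geodesic_from M d N e X a" and b: "morse_geodesic_from M d N e Y b"
    and a': "morse_geodesic_from M d N e X' a'" and b': "morse_geodesic_from M d N e Y' b'"
    and h: "geodesic_on M d {u0..u1} h" and up: "up \<in> {u0..u1}"
    and closest: "\<And>u. u \<in> {u0..u1} \<Longrightarrow> d e (h up) \<le> d e (h u)"
    and ends: "d (a T) (h u0) \<le> 1" "d (b T) (h u1) \<le> 1" "T \<le> d e X" "T \<le> d e Y"
    and h': "geodesic_on M d {u0'..u1'} h'" "u0' \<le> u1'"
    and ends': "d (a' m) (h' u0') \<le> 1" "d (b' m) (h' u1') \<le> 1" "m + 1 \<le> d e X'" "m + 1 \<le> d e Y'"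
    and fellow: "\<And>s. s \<in> {0..m + 1} \<Longrightarrow> d (a s) (a' s) \<le> F \<and> d (b s) (b' s) \<le> F"
    and m: "0 \<le> m" "m + 1 \<le> T"
    and t: "t \<in> {u0..up}" and far: "d e (h t) + 3 + F + 3 * (N 3 1 + 1) \<le> m"
  shows "\<exists>u'\<in>{u0'..u1'}. d (h t) (h' u') \<le> 7 * (N 3 1 + 1) + 2 * F + 9 / 2"
proof -
  define D where "D = N 3 1 + 1"
  have D: "1 \<le> D" using morse_gauge_nonneg[OF N, of 3 1] unfolding D_def by simp
  have "d (a 0) (a' 0) \<le> F" using fellow[of 0] m(1) by simp
  then have F: "0 \<le> F" using nonneg[of "a 0" "a' 0"] by linarith
  note ga = morse_geodesic_from_geodesic[OF a] morse_geodesic_from_start[OF a]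
    and ga' = morse_geodesic_from_geodesic[OF a'] morse_geodesic_from_start[OF a']
  have hM: "h u \<in> M" if "u \<in> {u0..u1}" for u using geodesic_on_mem[OF h that] .
  have tM: "h t \<in> M" using t up hM by auto
  obtain c where c: "geodesic_segment M d 0 (d e (h up)) c e (h up)"
    using geo e hM[OF up] unfolding geodesic_mspace_def by blast
  have "h t \<in> mnbhd M d D (a ` {0..d e X})"
    using morse_set_near_detour(1)[OF N morse_geodesic_from_image(1-3)[OF a] h up closest c _ ends(1)]
      t m ends unfolding D_def by auto
  then obtain \<sigma>1 where \<sigma>1: "\<sigma>1 \<in> {0..d e X}" "d (h t) (a \<sigma>1) \<le> D"
    unfolding mnbhd_def by blast
  have \<sigma>1_param: "\<bar>\<sigma>1 - d e (h t)\<bar> \<le> D"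
    using geodesic_from_param_close[OF ga tM \<sigma>1(1)] \<sigma>1(2) by simp
  obtain up' where up': "up' \<in> {u0'..u1'}" and closest': "\<And>u. u \<in> {u0'..u1'} \<Longrightarrow> d e (h' up') \<le> d e (h' u)"
    using geodesic_on_closest_point[OF h' e] by blast
  define \<sigma>' where "\<sigma>' = d e (h' up')"
  have lower: "\<sigma>' - 2 - F - 2 * D \<le> d e (h t)"
    using closest_point_dist_le_between_fellow_legs[OF N e geo a b a' b' h ends h'(1) up' closest' ends'
        fellow m] t up unfolding \<sigma>'_def D_def by auto
  define s where "s = max \<sigma>1 \<sigma>'"
  have s: "\<sigma>' \<le> s" "s \<le> m" "s - \<sigma>1 \<le> 2 + F + 3 * D"
    using \<sigma>1_param lower far D F unfolding s_def D_def by (auto simp: abs_le_iff max_def)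
  obtain u' where u': "u' \<in> {u0'..up'}" and "d (a' s) (h' u') \<le> 3 * D + 5 / 2"
    using morse_geodesic_shadowed_by_geodesic[OF N e geo a' h'(1) up' closest' _ ends'(1), of s]
      s m ends' unfolding \<sigma>'_def D_def by auto
  moreover have "d (a \<sigma>1) (a' \<sigma>1) \<le> F" using fellow \<sigma>1 s(2) unfolding s_def by auto
  moreover have "d (a' \<sigma>1) (a' s) = s - \<sigma>1"
    using geodesic_on_dist[OF ga'(1), of \<sigma>1 s] \<sigma>1 s ends' unfolding s_def by auto
  moreover have "d (h t) (h' u') \<le> d (h t) (a \<sigma>1) + d (a \<sigma>1) (a' \<sigma>1) + d (a' \<sigma>1) (a' s) + d (a' s) (h' u')"
  proof -
    have "a \<sigma>1 \<in> M" "a' \<sigma>1 \<in> M" "a' s \<in> M" "h' u' \<in> M"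
      using \<sigma>1 s ends' m u' up' a a' morse_geodesic_from_mem geodesic_on_mem[OF h'(1)]
      unfolding s_def by auto
    then show ?thesis using tM triangle by (smt (verit))
  qed
  ultimately have "d (h t) (h' u') \<le> 7 * D + 2 * F + 9 / 2"
    using \<sigma>1(2) s(3) by linarith
  then show ?thesis using u' up' unfolding D_def by auto
qed

lemma fellow_legs_geodesics_close:
  assumes N: "morse_gauge N" and e: "e \<in> M" and geo: "geodesic_mspace M d"
    and a: "morse_geodesic_from M d N e X a" and b: "morse_geodesic_from M d N e Y b"
    and a': "morse_geodesic_from M d N e X' a'" and b': "morse_geodesic_from M d N e Y' b'"
    and h: "geodesic_on M d {u0..u1} h"
    and ends: "d (a T) (h u0) \<le> 1" "d (b T) (h u1) \<le> 1" "T \<le> d e X" "T \<le> d e Y"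
    and h': "geodesic_on M d {u0'..u1'} h'" "u0' \<le> u1'"
    and ends': "d (a' m) (h' u0') \<le> 1" "d (b' m) (h' u1') \<le> 1" "m + 1 \<le> d e X'" "m + 1 \<le> d e Y'"
    and fellow: "\<And>s. s \<in> {0..m + 1} \<Longrightarrow> d (a s) (a' s) \<le> F \<and> d (b s) (b' s) \<le> F"
    and m: "0 \<le> m" "m + 1 \<le> T"
    and t: "t \<in> {u0..u1}" and far: "d e (h t) + 3 + F + 3 * (N 3 1 + 1) \<le> m"
  shows "\<exists>u'\<in>{u0'..u1'}. d (h t) (h' u') \<le> 7 * (N 3 1 + 1) + 2 * F + 9 / 2"
proof -
  obtain up where up: "up \<in> {u0..u1}" and closest: "\<And>u. u \<in> {u0..u1} \<Longrightarrow> d e (h up) \<le> d e (h u)"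
    using geodesic_on_closest_point[OF h _ e] t by auto
  show ?thesis
  proof (cases "t \<le> up")
    case True
    with t show ?thesis
      using fellow_legs_geodesics_close_half[OF N e geo a b a' b' h up closest ends h' ends' fellow m]
        far by auto
  next
    case False
    have up': "- up \<in> {-u1..-u0}" and t': "- t \<in> {-u1..- up}" using up t False by auto
    have closest': "d e (h (- (- up))) \<le> d e (h (- u))" if "u \<in> {-u1..-u0}" for u
      using closest that by simp
    have h'r: "geodesic_on M d {-u1'..-u0'} (\<lambda>u. h' (- u))" "-u1' \<le> -u0'"
      using geodesic_on_reflect[OF h'(1)] h'(2) by auto
    have fellow': "d (b s) (b' s) \<le> F \<and> d (a s) (a' s) \<le> F" if "s \<in> {0..m + 1}" for s
      using fellow[OF that] by simp
    obtain u' where "u' \<in> {-u1'..-u0'}" "d (h (- (- t))) (h' (- u')) \<le> 7 * (N 3 1 + 1) + 2 * F + 9 / 2"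
      using fellow_legs_geodesics_close_half[OF N e geo b a b' a' geodesic_on_reflect[OF h] up' closest'
          _ _ ends(4,3) h'r _ _ ends'(4,3) fellow' m t'] ends ends' far by auto
    then show ?thesis by (intro bexI[of _ "- u'"]) auto
  qed
qed

section \<open>Limit geodesics\<close>

lemma equiv_at_infinity_morse_geodesics_fellow_travel:
  assumes N: "morse_gauge N" and e: "e \<in> M" and geo: "geodesic_mspace M d"
    and z: "range z \<subseteq> morse_stratum M d N e"
    and zx: "equiv_at_infinity d e z x" and zx': "equiv_at_infinity d e z x'"
    and \<alpha>: "\<And>n. morse_geodesic_from M d N e (x n) (\<alpha> n)"
    and \<alpha>': "\<And>n. morse_geodesic_from M d N e (x' n) (\<alpha>' n)"
  shows "\<exists>n0. \<forall>j\<ge>n0. \<forall>j'\<ge>n0. \<forall>s\<in>{0..R}. d (\<alpha> j s) (\<alpha>' j' s) \<le> 8 * (N 3 1 + 1)"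
proof -
  obtain n1 n2 where n1: "\<And>i j. i \<ge> n1 \<Longrightarrow> j \<ge> n1 \<Longrightarrow> R \<le> gromov_product d e (z i) (x j)"
    and n2: "\<And>i j. i \<ge> n2 \<Longrightarrow> j \<ge> n2 \<Longrightarrow> R \<le> gromov_product d e (z i) (x' j)"
    using zx zx' unfolding equiv_at_infinity_def by meson
  define i where "i = max n1 n2"
  obtain \<gamma> where \<gamma>: "morse_geodesic_from M d N e (z i) \<gamma>"
    using z unfolding morse_stratum_def by blast
  have "d (\<alpha> j s) (\<alpha>' j' s) \<le> 8 * (N 3 1 + 1)" if j: "i \<le> j" "i \<le> j'" and s: "s \<in> {0..R}" for j j' s
  proof -
    have "R \<le> gromov_product d e (x j) (z i)" "R \<le> gromov_product d e (x' j') (z i)"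
      using n1[of i j] n2[of i j'] j gromov_product_commute unfolding i_def by auto
    moreover have M: "x j \<in> M" "x' j' \<in> M" "z i \<in> M"
      using \<alpha> \<alpha>' \<gamma> morse_geodesic_from_target_mem by blast+
    ultimately have "s \<le> gromov_product d e (x j) (z i)" "s \<le> gromov_product d e (x' j') (z i)"
      "s \<le> d e (z i)"
      using s gromov_product_le_dist[OF e M(3) M(1)] gromov_product_commute[of e "x j"] by auto
    then have "d (\<alpha> j s) (\<gamma> s) \<le> 4 * (N 3 1 + 1)" "d (\<alpha>' j' s) (\<gamma> s) \<le> 4 * (N 3 1 + 1)"
      "\<gamma> s \<in> M" "\<alpha> j s \<in> M" "\<alpha>' j' s \<in> M"
      using morse_geodesics_fellow_travel[OF N e geo \<alpha> \<gamma>] morse_geodesics_fellow_travel[OF N e geo \<alpha>' \<gamma>]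
        morse_geodesic_from_mem[OF \<gamma>] morse_geodesic_from_mem[OF \<alpha>] morse_geodesic_from_mem[OF \<alpha>']
        gromov_product_le_dist[OF e M(1) M(3)] gromov_product_le_dist[OF e M(2) M(3)] s by auto
    then show ?thesis using triangle' by (smt (verit))
  qed
  then show ?thesis by blast
qed

lemma limit_legs_eventually_fellow:
  assumes N: "morse_gauge N" and e: "e \<in> M" and geo: "geodesic_mspace M d"
    and z: "range z \<subseteq> morse_stratum M d N e"
    and zx: "equiv_at_infinity d e z x" and zx': "equiv_at_infinity d e z x'"
    and \<alpha>: "\<And>n. morse_geodesic_from M d N e (x n) (\<alpha> n)"
    and \<alpha>': "\<And>n. morse_geodesic_from M d N e (x' n) (\<alpha>' n)"
    and \<phi>: "strict_mono \<phi>" "strict_mono \<phi>'"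
    and rx: "segs_converge_to_ray d (\<lambda>n. d e (x (\<phi> n))) (\<lambda>n. \<alpha> (\<phi> n)) rx"
    and rx': "segs_converge_to_ray d (\<lambda>n. d e (x' (\<phi>' n))) (\<lambda>n. \<alpha>' (\<phi>' n)) rx'"
    and m: "0 \<le> m" "m \<le> T"
  shows "\<exists>n0. \<forall>k\<ge>n0. T \<le> d e (x (\<phi> k)) \<and> d (\<alpha> (\<phi> k) T) (rx T) < 1 \<and>
           m + 1 \<le> d e (x' (\<phi>' k)) \<and> d (\<alpha>' (\<phi>' k) m) (rx' m) < 1 \<and>
           (\<forall>s\<in>{0..m + 1}. d (\<alpha> (\<phi> k) s) (\<alpha>' (\<phi>' k) s) \<le> 8 * (N 3 1 + 1))"
proof -
  obtain n1 where n1: "\<forall>j\<ge>n1. \<forall>j'\<ge>n1. \<forall>s\<in>{0..m + 1}. d (\<alpha> j s) (\<alpha>' j' s) \<le> 8 * (N 3 1 + 1)"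
    using equiv_at_infinity_morse_geodesics_fellow_travel[OF N e geo z zx zx' \<alpha> \<alpha>'] by blast
  have T: "0 \<le> T" "0 \<le> m + 1" using m by linarith+
  obtain n2 where n2: "\<forall>k\<ge>n2. T \<le> d e (x (\<phi> k)) \<and> (\<forall>t\<in>{0..T}. d (\<alpha> (\<phi> k) t) (rx t) < 1)"
    using rx[unfolded segs_converge_to_ray_def, rule_format, OF T(1) zero_less_one] by blast
  obtain n3 where n3: "\<forall>k\<ge>n3. m + 1 \<le> d e (x' (\<phi>' k)) \<and> (\<forall>t\<in>{0..m + 1}. d (\<alpha>' (\<phi>' k) t) (rx' t) < 1)"
    using rx'[unfolded segs_converge_to_ray_def, rule_format, OF T(2) zero_less_one] by blast
  show ?thesis
  proof (intro exI[of _ "max n1 (max n2 n3)"] allI impI)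
    fix k assume k: "max n1 (max n2 n3) \<le> k"
    then have "n1 \<le> \<phi> k" "n1 \<le> \<phi>' k"
      using strict_mono_imp_increasing[OF \<phi>(1), of k] strict_mono_imp_increasing[OF \<phi>(2), of k] by auto
    then show "T \<le> d e (x (\<phi> k)) \<and> d (\<alpha> (\<phi> k) T) (rx T) < 1 \<and>
           m + 1 \<le> d e (x' (\<phi>' k)) \<and> d (\<alpha>' (\<phi>' k) m) (rx' m) < 1 \<and>
           (\<forall>s\<in>{0..m + 1}. d (\<alpha> (\<phi> k) s) (\<alpha>' (\<phi>' k) s) \<le> 8 * (N 3 1 + 1))"
      using n1 n2[rule_format, of k] n3[rule_format, of k] k m by auto
  qed
qed

lemma segs_converge_to_line_large_index:
  assumes \<psi>: "strict_mono \<psi>" and g: "segs_converge_to_line d (\<lambda>n. A (\<psi> n)) (\<lambda>n. B (\<psi> n)) (\<lambda>n. g (\<psi> n)) g0"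
    and T: "0 \<le> T"
  shows "\<exists>j. R \<le> real j \<and> A j \<le> -T \<and> T \<le> B j \<and> (\<forall>t\<in>{-T..T}. d (g j t) (g0 t) < 1)"
proof -
  obtain n0 where n0: "\<forall>n\<ge>n0. A (\<psi> n) \<le> -T \<and> T \<le> B (\<psi> n) \<and> (\<forall>t\<in>{-T..T}. d (g (\<psi> n) t) (g0 t) < 1)"
    using g T unfolding segs_converge_to_line_def by (meson zero_less_one)
  define n where "n = max n0 (nat \<lceil>R\<rceil>)"
  have "R \<le> real (\<psi> n)"
    using strict_mono_imp_increasing[OF \<psi>, of n] unfolding n_def by linarith
  moreover have "n0 \<le> n" unfolding n_def by simp
  ultimately show ?thesis using n0 by (intro exI[of _ "\<psi> n"]) auto
qed

lemma near_segment_near_line: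
  assumes h: "geodesic_on M d {u0..u1} h" and g0: "\<And>t. g0 t \<in> M"
    and window: "u0 \<le> -T" "T \<le> u1" "\<And>t. t \<in> {-T..T} \<Longrightarrow> d (h t) (g0 t) < 1"
    and p: "p \<in> M" and u: "u \<in> {u0..u1}" "d p (h u) \<le> K" and T: "K + 1 + d p (g0 0) \<le> T"
  shows "d p (g0 u) < K + 1"
proof -
  have "0 \<le> K" using u(2) nonneg order_trans by blast
  then have "0 \<le> T" using T nonneg[of p "g0 0"] by linarith
  then have zero: "0 \<in> {u0..u1}" "0 \<in> {-T..T}" using window(1,2) by auto
  have M: "h u \<in> M" "h 0 \<in> M" using geodesic_on_mem[OF h] u zero by auto
  have "\<bar>u\<bar> = d (h u) (h 0)" using geodesic_on_dist[OF h u(1) zero(1)] by simp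
  also have "\<dots> \<le> d (h u) p + d p (g0 0) + d (g0 0) (h 0)"
    using triangle M p g0 by (smt (verit))
  also have "\<dots> < K + d p (g0 0) + 1"
    using u(2) window(3)[OF zero(2)] commute by (smt (verit))
  finally have "u \<in> {-T..T}" using T by auto
  then have "d (h u) (g0 u) < 1" using window(3) by blast
  then show ?thesis using triangle[OF p M(1) g0[of u]] u(2) by linarith
qed

lemma limit_segments_close:
  assumes N: "morse_gauge N" and e: "e \<in> M" and geo: "geodesic_mspace M d"
    and z: "range z \<subseteq> morse_stratum M d N e" "equiv_at_infinity d e z x" "equiv_at_infinity d e z x'"
    and w: "range w \<subseteq> morse_stratum M d N e" "equiv_at_infinity d e w y" "equiv_at_infinity d e w y'"
    and \<alpha>: "\<And>n. morse_geodesic_from M d N e (x n) (\<alpha> n)"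
    and \<beta>: "\<And>n. morse_geodesic_from M d N e (y n) (\<beta> n)"
    and \<alpha>': "\<And>n. morse_geodesic_from M d N e (x' n) (\<alpha>' n)"
    and \<beta>': "\<And>n. morse_geodesic_from M d N e (y' n) (\<beta>' n)"
    and \<phi>: "strict_mono \<phi>" "strict_mono \<phi>'"
    and rx: "segs_converge_to_ray d (\<lambda>n. d e (x (\<phi> n))) (\<lambda>n. \<alpha> (\<phi> n)) rx"
    and ry: "segs_converge_to_ray d (\<lambda>n. d e (y (\<phi> n))) (\<lambda>n. \<beta> (\<phi> n)) ry"
    and rx': "segs_converge_to_ray d (\<lambda>n. d e (x' (\<phi>' n))) (\<lambda>n. \<alpha>' (\<phi>' n)) rx'"
    and ry': "segs_converge_to_ray d (\<lambda>n. d e (y' (\<phi>' n))) (\<lambda>n. \<beta>' (\<phi>' n)) ry'"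
    and h: "geodesic_segment M d u0 u1 h (rx T) (ry T)"
    and h': "geodesic_segment M d u0' u1' h' (rx' m) (ry' m)"
    and m: "0 \<le> m" "m + 1 \<le> T"
    and t: "t \<in> {u0..u1}" and far: "d e (h t) + 3 + 11 * (N 3 1 + 1) \<le> m"
  shows "\<exists>u'\<in>{u0'..u1'}. d (h t) (h' u') \<le> 23 * (N 3 1 + 1) + 9 / 2"
proof -
  obtain n1 where n1: "\<forall>k\<ge>n1. T \<le> d e (x (\<phi> k)) \<and> d (\<alpha> (\<phi> k) T) (rx T) < 1 \<and>
      m + 1 \<le> d e (x' (\<phi>' k)) \<and> d (\<alpha>' (\<phi>' k) m) (rx' m) < 1 \<and>
      (\<forall>s\<in>{0..m + 1}. d (\<alpha> (\<phi> k) s) (\<alpha>' (\<phi>' k) s) \<le> 8 * (N 3 1 + 1))"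
    using limit_legs_eventually_fellow[OF N e geo z \<alpha> \<alpha>' \<phi> rx rx'] m by fastforce
  obtain n2 where n2: "\<forall>k\<ge>n2. T \<le> d e (y (\<phi> k)) \<and> d (\<beta> (\<phi> k) T) (ry T) < 1 \<and>
      m + 1 \<le> d e (y' (\<phi>' k)) \<and> d (\<beta>' (\<phi>' k) m) (ry' m) < 1 \<and>
      (\<forall>s\<in>{0..m + 1}. d (\<beta> (\<phi> k) s) (\<beta>' (\<phi>' k) s) \<le> 8 * (N 3 1 + 1))"
    using limit_legs_eventually_fellow[OF N e geo w \<beta> \<beta>' \<phi> ry ry'] m by fastforce
  define k where "k = max n1 n2"
  have legs: "T \<le> d e (x (\<phi> k))" "T \<le> d e (y (\<phi> k))" "m + 1 \<le> d e (x' (\<phi>' k))" "m + 1 \<le> d e (y' (\<phi>' k))"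
    "d (\<alpha> (\<phi> k) T) (h u0) \<le> 1" "d (\<beta> (\<phi> k) T) (h u1) \<le> 1"
    "d (\<alpha>' (\<phi>' k) m) (h' u0') \<le> 1" "d (\<beta>' (\<phi>' k) m) (h' u1') \<le> 1"
    "\<And>s. s \<in> {0..m + 1} \<Longrightarrow> d (\<alpha> (\<phi> k) s) (\<alpha>' (\<phi>' k) s) \<le> 8 * (N 3 1 + 1) \<and>
       d (\<beta> (\<phi> k) s) (\<beta>' (\<phi>' k) s) \<le> 8 * (N 3 1 + 1)"
    using n1[rule_format, of k] n2[rule_format, of k] h h' unfolding k_def geodesic_segment_def
    by auto
  have "\<exists>u'\<in>{u0'..u1'}. d (h t) (h' u') \<le> 7 * (N 3 1 + 1) + 2 * (8 * (N 3 1 + 1)) + 9 / 2"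
    using h h' fellow_legs_geodesics_close[OF N e geo \<alpha> \<beta> \<alpha>' \<beta>' _ legs(5,6,1,2) _ _ legs(7,8,3,4)
        legs(9) m t] far unfolding geodesic_segment_def by auto
  then show ?thesis by (simp add: algebra_simps)
qed

lemma limit_geodesics_close:
  assumes N: "morse_gauge N" and e: "e \<in> M" and geo: "geodesic_mspace M d"
    and L: "Lm \<in> morse_boundary M d N e" "Lp \<in> morse_boundary M d N e"
    and g0: "limit_geodesic M d N e Lm Lp g0" and g0': "limit_geodesic M d N e Lm Lp g0'"
  shows "\<exists>t'. d (g0 t) (g0' t') \<le> 23 * (N 3 1 + 1) + 7"
proof -
  define K where "K = 23 * (N 3 1 + 1) + 11 / 2"
  obtain x y \<alpha> \<beta> \<phi> rx ry A B g \<psi> where x: "x \<in> Lm" "y \<in> Lp"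
    and \<alpha>: "\<And>n. morse_geodesic_from M d N e (x n) (\<alpha> n)"
    and \<beta>: "\<And>n. morse_geodesic_from M d N e (y n) (\<beta> n)"
    and \<phi>: "strict_mono \<phi>"
    and rx: "segs_converge_to_ray d (\<lambda>n. d e (x (\<phi> n))) (\<lambda>n. \<alpha> (\<phi> n)) rx"
    and ry: "segs_converge_to_ray d (\<lambda>n. d e (y (\<phi> n))) (\<lambda>n. \<beta> (\<phi> n)) ry"
    and g: "\<And>n. geodesic_segment M d (A n) (B n) (g n) (rx (real n)) (ry (real n))"
    and \<psi>: "strict_mono \<psi>" and line: "biinfinite_geodesic M d g0"
    and conv: "segs_converge_to_line d (\<lambda>n. A (\<psi> n)) (\<lambda>n. B (\<psi> n)) (\<lambda>n. g (\<psi> n)) g0"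
    using g0 unfolding limit_geodesic_def by blast
  obtain x' y' \<alpha>' \<beta>' \<phi>' rx' ry' A' B' g' \<psi>' where x': "x' \<in> Lm" "y' \<in> Lp"
    and \<alpha>': "\<And>n. morse_geodesic_from M d N e (x' n) (\<alpha>' n)"
    and \<beta>': "\<And>n. morse_geodesic_from M d N e (y' n) (\<beta>' n)"
    and \<phi>': "strict_mono \<phi>'"
    and rx': "segs_converge_to_ray d (\<lambda>n. d e (x' (\<phi>' n))) (\<lambda>n. \<alpha>' (\<phi>' n)) rx'"
    and ry': "segs_converge_to_ray d (\<lambda>n. d e (y' (\<phi>' n))) (\<lambda>n. \<beta>' (\<phi>' n)) ry'"
    and g': "\<And>n. geodesic_segment M d (A' n) (B' n) (g' n) (rx' (real n)) (ry' (real n))"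
    and \<psi>': "strict_mono \<psi>'" and line': "biinfinite_geodesic M d g0'"
    and conv': "segs_converge_to_line d (\<lambda>n. A' (\<psi>' n)) (\<lambda>n. B' (\<psi>' n)) (\<lambda>n. g' (\<psi>' n)) g0'"
    using g0' unfolding limit_geodesic_def by blast
  obtain z w where z: "range z \<subseteq> morse_stratum M d N e" "equiv_at_infinity d e z x" "equiv_at_infinity d e z x'"
    and w: "range w \<subseteq> morse_stratum M d N e" "equiv_at_infinity d e w y" "equiv_at_infinity d e w y'"
    using morse_boundary_common_representative L x x' by metis
  have g0'M: "g0' s \<in> M" for s using line' unfolding biinfinite_geodesic_def geodesic_on_def by auto
  define T' where "T' = K + 1 + d (g0 t) (g0' 0)"
  have "0 \<le> T'" using morse_gauge_nonneg[OF N, of 3 1] unfolding T'_def K_def by simp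
  then obtain j' where j': "d e (g0 t) + 4 + 11 * (N 3 1 + 1) \<le> real j'" "A' j' \<le> -T'" "T' \<le> B' j'"
    "\<And>s. s \<in> {-T'..T'} \<Longrightarrow> d (g' j' s) (g0' s) < 1"
    using segs_converge_to_line_large_index[OF \<psi>' conv'] by blast
  obtain j where j: "real j' + 1 \<le> real j" "A j \<le> -\<bar>t\<bar>" "\<bar>t\<bar> \<le> B j" "d (g j t) (g0 t) < 1"
    using segs_converge_to_line_large_index[OF \<psi> conv abs_ge_zero, of "real j' + 1" t] by force
  have t: "t \<in> {A j..B j}" using j by auto
  have pM: "g0 t \<in> M" "g j t \<in> M"
    using line geodesic_on_mem g[of j] t unfolding biinfinite_geodesic_def geodesic_segment_def
    by blast+
  have "d e (g j t) \<le> d e (g0 t) + 1" using triangle[OF e pM(1,2)] j(4) commute by simp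
  then obtain u' where u': "u' \<in> {A' j'..B' j'}" and "d (g j t) (g' j' u') \<le> 23 * (N 3 1 + 1) + 9 / 2"
    using limit_segments_close[OF N e geo z w \<alpha> \<beta> \<alpha>' \<beta>' \<phi> \<phi>' rx ry rx' ry' g[of j] g'[of j'] _ j(1) t] j'
    by fastforce
  moreover have "g' j' u' \<in> M"
    using geodesic_on_mem u' g'[of j'] unfolding geodesic_segment_def by blast
  ultimately have "d (g0 t) (g' j' u') \<le> K"
    using triangle[OF pM(1,2)] j(4) commute[of "g j t" "g0 t"] unfolding K_def by fastforce
  moreover have "geodesic_on M d {A' j'..B' j'} (g' j')"
    using g'[of j'] unfolding geodesic_segment_def by blast
  ultimately have "d (g0 t) (g0' u') < K + 1"
    using near_segment_near_line[where h = "g' j'", OF _ g0'M j'(2,3,4) pM(1) u'] unfolding T'_def by blast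
  then show ?thesis unfolding K_def by (intro exI[of _ u']) auto
qed

end

theorem proposition3p7:
  fixes N :: "real \<Rightarrow> real \<Rightarrow> real"
  assumes "morse_gauge N"
  shows "\<exists>K'>0. \<forall>(M :: 'a set) d e Lm Lp g g'.
           Metric_space M d \<and> proper_mspace M d \<and> geodesic_mspace M d \<and> e \<in> M \<and>
           Lm \<in> morse_boundary M d N e \<and> Lp \<in> morse_boundary M d N e \<and> Lm \<noteq> Lp \<and>
           limit_geodesic M d N e Lm Lp g \<and> limit_geodesic M d N e Lm Lp g'
           \<longrightarrow> mhausdist d (range g) (range g') < ereal K'"
proof (intro exI[of _ "23 * (N 3 1 + 1) + 8"] conjI allI impI)
  show "0 < 23 * (N 3 1 + 1) + 8" using morse_gauge_nonneg[OF assms, of 3 1] by simp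
  fix M :: "'a set" and d e Lm Lp g g'
  assume H: "Metric_space M d \<and> proper_mspace M d \<and> geodesic_mspace M d \<and> e \<in> M \<and>
    Lm \<in> morse_boundary M d N e \<and> Lp \<in> morse_boundary M d N e \<and> Lm \<noteq> Lp \<and>
    limit_geodesic M d N e Lm Lp g \<and> limit_geodesic M d N e Lm Lp g'"
  then have M: "Metric_space M d" by simp
  note close = Metric_space.limit_geodesics_close[OF M assms, of e Lm Lp]
  have "mhausdist d (range g) (range g') \<le> ereal (23 * (N 3 1 + 1) + 7)"
  proof (rule mhausdist_le)
    fix s assume "s \<in> range g"
    then obtain t where "s = g t" by blast
    then show "\<exists>s'\<in>range g'. d s s' \<le> 23 * (N 3 1 + 1) + 7"
      using close[of g g' t] H by blast
  next
    fix s' assume "s' \<in> range g'"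
    then obtain t where "s' = g' t" by blast
    then show "\<exists>s\<in>range g. d s s' \<le> 23 * (N 3 1 + 1) + 7"
      using close[of g' g t] H Metric_space.commute[OF M] by (metis rangeI)
  qed
  then show "mhausdist d (range g) (range g') < ereal (23 * (N 3 1 + 1) + 8)"
    by (simp add: order_le_less_trans)
qed

end
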